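(* Let $\theta\in(0,\pi)$. Then for all $x,y\in S_\theta$, $$s_{S_\theta}(x,y)\le{\rm th}(\rho_{S_\theta}(x,y)/2)\le(\pi/\theta)\sin(\theta/2)\,s_{S_\theta}(x,y),$$ and this inequality is sharp.
   Context: $S_\theta=\{x\in\mathbb{C}:0<\arg(x)<\theta\}$. For a domain $G\subsetneq\mathbb{C}$, $s_G(x,y)=\frac{|x-y|}{\inf_{z\in\partial G}(|x-z|+|z-y|)}$. The hyperbolic metric of $\mathbb{H}^2=\{z:{\rm Im}\,z>0\}$ satisfies ${\rm th}(\rho_{\mathbb{H}^2}(u,v)/2)=|u-v|/|u-\overline{v}|$, and $\rho_{S_\theta}(x,y)=\rho_{\mathbb{H}^2}(x^{\pi/\theta},y^{\pi/\theta})$ (principal branch power, a conformal map of $S_\theta$ onto $\mathbb{H}^2$). *)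

theory Defs
  imports "HOL-Analysis.Analysis"
begin

definition sector :: "real \<Rightarrow> complex set" where
  "sector \<theta> = {x. 0 < Arg x \<and> Arg x < \<theta>}"

definition s_metric :: "complex set \<Rightarrow> complex \<Rightarrow> complex \<Rightarrow> real" where
  "s_metric G x y = cmod (x - y) / (INF z\<in>frontier G. cmod (x - z) + cmod (z - y))"

text \<open>Hyperbolic metric of the upper half plane, via th(rho/2) = |u-v|/|u-conj v|.\<close>
definition rho_H :: "complex \<Rightarrow> complex \<Rightarrow> real" where
  "rho_H u v = 2 * artanh (cmod (u - v) / cmod (u - cnj v))"

text \<open>Hyperbolic metric of the sector, via the principal-branch power map.\<close>
definition rho_S :: "real \<Rightarrow> complex \<Rightarrow> complex \<Rightarrow> real" where
  "rho_S \<theta> x y = rho_H (x powr of_real (pi / \<theta>)) (y powr of_real (pi / \<theta>))"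

end

(* Write x = r e^(ia), y = p e^(ib) and put l = ln (r/p) / 2, h = |a - b| / 2, m = (a + b) / 2,
   k = pi / theta.  Then |x - y|^2 = 4 r p (sinh^2 l + sin^2 h), and since z^k multiplies l and
   all arguments by k, th (rho/2) = |u - v| / |u - conj v| is the quotient of
   sqrt (sinh^2 (k l) + sin^2 (k h)) by sqrt (sinh^2 (k l) + sin^2 (k m)).
   Reflecting y in a boundary ray does not change its distance to points of that ray, so the
   detour inf (|x - z| + |z - y|) over the boundary is at least the distance from x to the nearer
   mirror image of y, and at most the distance to the mirror image in a ray that the segment
   meets.  In polar form these distances are 2 sqrt (r p) sqrt (sinh^2 l + sin^2 mu) with
   mu = m or mu = theta - m.  Both inequalities thus compare (sinh^2 + sin^2 h)/(sinh^2 + sin^2 mu)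
   at the scales 1 and k, which follows from
   k^2 sinh^2 l <= sinh^2 (k l) <= k^2 sinh^2 l + (k^2 - 1)/3 sinh^2 l sinh^2 (k l),
   sin (k t) <= k sin t and the monotonicity of sin (k t) / sin t.  On the bisector,
   x = e^l e^(i theta/2) and y = e^(-l) e^(i theta/2), the quotient tends to 1 as l grows and to
   (pi / theta) sin (theta / 2) as l tends to 0, which gives sharpness. *)

theory Submission
  imports Defs
begin

section \<open>Elementary trigonometric and hyperbolic inequalities\<close>

lemma sin_mult_le:
  fixes k t :: real
  assumes k: "1 \<le> k" and t: "0 \<le> t" and kt: "k * t \<le> pi"
  shows "sin (k * t) \<le> k * sin t"
proof -
  let ?g = "\<lambda>u. k * sin u - sin (k * u)"
  have "?g 0 \<le> ?g t"
  proof (rule deriv_nonneg_imp_mono[where g = ?g and g' = "\<lambda>u. k * cos u - k * cos (k * u)"])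
    fix u assume u: "u \<in> {0..t}"
    show "(?g has_real_derivative k * cos u - k * cos (k * u)) (at u)"
      by (auto intro!: derivative_eq_intros)
    have "u \<le> k * u" "k * u \<le> k * t" using u k by (auto simp: mult_le_cancel_right1 intro: mult_left_mono)
    then have "cos (k * u) \<le> cos u" using u kt by (intro cos_monotone_0_pi_le) auto
    then show "0 \<le> k * cos u - k * cos (k * u)" using k by (simp add: right_diff_distrib[symmetric])
  qed (use t in auto)
  then show ?thesis by simp
qed

lemma mult_cos_sin_le_sin_cos:
  fixes k t :: real
  assumes k: "1 \<le> k" and t: "0 \<le> t" and kt: "k * t \<le> pi"
  shows "k * cos (k * t) * sin t \<le> sin (k * t) * cos t"
proof -
  let ?g = "\<lambda>u. sin (k * u) * cos u - k * cos (k * u) * sin u"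
  have "?g 0 \<le> ?g t"
  proof (rule deriv_nonneg_imp_mono[where g = ?g and g' = "\<lambda>u. (k\<^sup>2 - 1) * sin (k * u) * sin u"])
    fix u assume u: "u \<in> {0..t}"
    show "(?g has_real_derivative (k\<^sup>2 - 1) * sin (k * u) * sin u) (at u)"
      by (auto intro!: derivative_eq_intros simp: algebra_simps power2_eq_square)
    have "u \<le> k * u" "k * u \<le> k * t" using u k by (auto simp: mult_le_cancel_right1 intro: mult_left_mono)
    then have "0 \<le> sin (k * u)" "0 \<le> sin u" using u kt by (auto intro!: sin_ge_zero)
    moreover have "1 \<le> k\<^sup>2" using k by (simp add: one_le_power)
    ultimately show "0 \<le> (k\<^sup>2 - 1) * sin (k * u) * sin u" by simp
  qed (use t in auto)
  then show ?thesis by simp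
qed

lemma sin_mult_ratio_antimono:
  fixes k h m :: real
  assumes k: "1 \<le> k" and h: "0 \<le> h" and hm: "h \<le> m" and km: "k * m < pi"
  shows "sin h * sin (k * m) \<le> sin (k * h) * sin m"
proof (cases "h = 0")
  case False
  with h have h0: "0 < h" by simp
  have "m \<le> k * m" using mult_right_mono[of 1 k m] h hm k by simp
  then have sin_pos: "0 < sin u" if "h \<le> u" "u \<le> m" for u
    using that h0 km by (intro sin_gt_zero) linarith+
  let ?g = "\<lambda>u. - (sin (k * u) / sin u)"
  have "?g h \<le> ?g m"
  proof (rule deriv_nonneg_imp_mono
      [where g = ?g and g' = "\<lambda>u. (sin (k * u) * cos u - k * cos (k * u) * sin u) / (sin u)\<^sup>2"])
    fix u assume u: "u \<in> {h..m}"
    then have "sin u \<noteq> 0" using sin_pos by force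
    then show "(?g has_real_derivative (sin (k * u) * cos u - k * cos (k * u) * sin u) / (sin u)\<^sup>2) (at u)"
      by (auto intro!: derivative_eq_intros simp: field_simps power2_eq_square)
    have "k * u \<le> k * m" using u k by (intro mult_left_mono) auto
    then have "k * u \<le> pi" using km by linarith
    then show "0 \<le> (sin (k * u) * cos u - k * cos (k * u) * sin u) / (sin u)\<^sup>2"
      using mult_cos_sin_le_sin_cos[OF k] u h by simp
  qed (fact hm)
  then show ?thesis using sin_pos[of h] sin_pos[of m] hm by (simp add: field_simps)
qed simp

lemma mult_cos_le_sin:
  fixes t :: real
  assumes "0 \<le> t" "t \<le> pi"
  shows "t * cos t \<le> sin t"
proof -
  let ?g = "\<lambda>u. sin u - u * cos u"
  have "?g 0 \<le> ?g t"
  proof (rule deriv_nonneg_imp_mono[where g = ?g and g' = "\<lambda>u. u * sin u"])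
    fix u assume u: "u \<in> {0..t}"
    show "(?g has_real_derivative u * sin u) (at u)"
      by (auto intro!: derivative_eq_intros)
    show "0 \<le> u * sin u" using u assms by (simp add: sin_ge_zero)
  qed (use assms in auto)
  then show ?thesis by simp
qed

lemma cube_mult_cos_le_sin_diff:
  fixes t :: real
  assumes "0 \<le> t" "t \<le> pi"
  shows "t ^ 3 * cos t / 3 \<le> sin t - t * cos t"
proof -
  let ?g = "\<lambda>u. 3 * sin u - 3 * u * cos u - u ^ 3 * cos u"
  have "?g 0 \<le> ?g t"
  proof (rule deriv_nonneg_imp_mono
      [where g = ?g and g' = "\<lambda>u. 3 * u * (sin u - u * cos u) + u ^ 3 * sin u"])
    fix u assume u: "u \<in> {0..t}"
    show "(?g has_real_derivative 3 * u * (sin u - u * cos u) + u ^ 3 * sin u) (at u)"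
      by (auto intro!: derivative_eq_intros simp: algebra_simps power2_eq_square)
    have "0 \<le> sin u" "u * cos u \<le> sin u" using u assms by (auto intro!: sin_ge_zero mult_cos_le_sin)
    then show "0 \<le> 3 * u * (sin u - u * cos u) + u ^ 3 * sin u" using u by simp
  qed (use assms in auto)
  then show ?thesis by simp
qed

lemma sin_sq_lower_bound:
  fixes t :: real
  assumes t: "0 < t" "t \<le> pi / 2"
  shows "3 \<le> (sin t)\<^sup>2 * (pi\<^sup>2 / (2 * t\<^sup>2) + 1)"
proof -
  let ?g = "\<lambda>u. - ((sin u)\<^sup>2 * (pi\<^sup>2 / (2 * u\<^sup>2) + 1))"
  let ?g' = "\<lambda>u. sin u / u ^ 3 * (pi\<^sup>2 * (sin u - u * cos u) - 2 * (u ^ 3 * cos u))"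
  have "?g t \<le> ?g (pi / 2)"
  proof (rule deriv_nonneg_imp_mono[where g = ?g and g' = ?g'])
    fix u assume u: "u \<in> {t..pi / 2}"
    then have u0: "0 < u" using t by simp
    then show "(?g has_real_derivative ?g' u) (at u)"
      by (auto intro!: derivative_eq_intros simp: field_simps eval_nat_numeral)
    have "u ^ 3 * cos u / 3 \<le> sin u - u * cos u" using u0 u by (intro cube_mult_cos_le_sin_diff) auto
    moreover have "0 \<le> u ^ 3 * cos u" using u0 u by (auto intro!: mult_nonneg_nonneg cos_ge_zero)
    moreover have "3 * 3 \<le> pi * pi" using pi_gt3 by (intro mult_mono) auto
    ultimately have "6 * (sin u - u * cos u) \<le> pi\<^sup>2 * (sin u - u * cos u)"
      by (intro mult_right_mono) (auto simp: power2_eq_square)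
    with \<open>u ^ 3 * cos u / 3 \<le> sin u - u * cos u\<close>
    have "2 * (u ^ 3 * cos u) \<le> pi\<^sup>2 * (sin u - u * cos u)" by (simp add: field_simps)
    moreover have "0 \<le> sin u / u ^ 3" using u0 u by (auto intro!: divide_nonneg_pos sin_ge_zero)
    ultimately show "0 \<le> ?g' u" by (intro mult_nonneg_nonneg) auto
  qed (use t in auto)
  moreover have "pi\<^sup>2 / (2 * (pi / 2)\<^sup>2) = 2" by (simp add: power2_eq_square)
  ultimately show ?thesis by simp
qed

lemma sin_sq_diff:
  fixes x y :: real
  shows "(sin x)\<^sup>2 - (sin y)\<^sup>2 = sin (x + y) * sin (x - y)"
proof -
  have "sin (x + y) * sin (x - y) = (sin x * cos y)\<^sup>2 - (cos x * sin y)\<^sup>2"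
    by (simp add: sin_add sin_diff power2_eq_square algebra_simps)
  also have "\<dots> = (sin x)\<^sup>2 - (sin y)\<^sup>2"
    by (simp add: power_mult_distrib cos_squared_eq algebra_simps)
  finally show ?thesis ..
qed

lemma self_le_sinh:
  fixes x :: real
  assumes "0 \<le> x"
  shows "x \<le> sinh x"
proof -
  have "(\<lambda>u. sinh u - u) 0 \<le> (\<lambda>u. sinh u - u) x"
    by (rule deriv_nonneg_imp_mono[where g' = "\<lambda>u. cosh u - 1"])
       (use assms in \<open>auto intro!: derivative_eq_intros simp: cosh_real_ge_1\<close>)
  then show ?thesis by simp
qed

lemma mult_sinh_le_sinh_mult:
  fixes k y :: real
  assumes k: "1 \<le> k" and y: "0 \<le> y"
  shows "k * sinh y \<le> sinh (k * y)"
proof -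
  let ?g = "\<lambda>u. sinh (k * u) - k * sinh u"
  have "?g 0 \<le> ?g y"
  proof (rule deriv_nonneg_imp_mono[where g = ?g and g' = "\<lambda>u. k * cosh (k * u) - k * cosh u"])
    fix u assume u: "u \<in> {0..y}"
    show "(?g has_real_derivative k * cosh (k * u) - k * cosh u) (at u)"
      by (auto intro!: derivative_eq_intros)
    have "cosh u \<le> cosh (k * u)"
      using u k by (subst cosh_real_nonneg_le_iff) (auto simp: mult_le_cancel_right1)
    then show "0 \<le> k * cosh (k * u) - k * cosh u" using k by (simp add: right_diff_distrib[symmetric])
  qed (use y in auto)
  then show ?thesis by simp
qed

lemma mult_cosh_le_sinh_add_cube:
  fixes z :: real
  assumes z: "0 \<le> z"
  shows "z * cosh z \<le> sinh z + sinh z ^ 3 / 3"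
proof -
  let ?g = "\<lambda>u::real. sinh u - u * cosh u + sinh u ^ 3 / 3"
  have "?g 0 \<le> ?g z"
  proof (rule deriv_nonneg_imp_mono[where g = ?g and g' = "\<lambda>u. sinh u * (sinh u * cosh u - u)"])
    fix u :: real assume u: "u \<in> {0..z}"
    show "(?g has_real_derivative sinh u * (sinh u * cosh u - u)) (at u)"
      by (auto intro!: derivative_eq_intros simp: algebra_simps power2_eq_square)
    have "2 * u \<le> sinh (2 * u)" using u by (intro self_le_sinh) auto
    then have "u \<le> sinh u * cosh u" by (simp add: sinh_double)
    then show "0 \<le> sinh u * (sinh u * cosh u - u)" using u by simp
  qed (use z in auto)
  then show ?thesis by simp
qed

lemma inverse_sinh_sq_le:
  fixes k y :: real
  assumes k: "1 \<le> k" and y: "0 < y"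
  shows "1 / (sinh y)\<^sup>2 \<le> k\<^sup>2 / (sinh (k * y))\<^sup>2 + (k\<^sup>2 - 1) / 3"
proof -
  let ?g = "\<lambda>c. c\<^sup>2 / (sinh (c * y))\<^sup>2 + (c\<^sup>2 - 1) / 3"
  let ?g' = "\<lambda>c. 2 * c / sinh (c * y) ^ 3 * (sinh (c * y) - c * y * cosh (c * y) + sinh (c * y) ^ 3 / 3)"
  have "?g 1 \<le> ?g k"
  proof (rule deriv_nonneg_imp_mono[where g = ?g and g' = ?g'])
    fix c assume c: "c \<in> {1..k}"
    then have cy: "0 < c * y" using y by simp
    then have "sinh (c * y) \<noteq> 0" by (metis sinh_real_pos_iff less_irrefl)
    then show "(?g has_real_derivative ?g' c) (at c)"
      by (auto intro!: derivative_eq_intros simp: field_simps power2_eq_square power3_eq_cube)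
    show "0 \<le> ?g' c"
      using c cy mult_cosh_le_sinh_add_cube[of "c * y"] by (intro mult_nonneg_nonneg) auto
  qed (fact k)
  then show ?thesis by simp
qed

lemma sinh_mult_sq_bounds:
  fixes k l :: real
  assumes k: "1 \<le> k"
  shows "k\<^sup>2 * (sinh l)\<^sup>2 \<le> (sinh (k * l))\<^sup>2"
    and "(sinh (k * l))\<^sup>2 - k\<^sup>2 * (sinh l)\<^sup>2 \<le> (k\<^sup>2 - 1) / 3 * (sinh l)\<^sup>2 * (sinh (k * l))\<^sup>2"
proof -
  define y where "y = \<bar>l\<bar>"
  have y: "0 \<le> y" by (simp add: y_def)
  have S: "(sinh l)\<^sup>2 = (sinh y)\<^sup>2" and T: "(sinh (k * l))\<^sup>2 = (sinh (k * y))\<^sup>2"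
    using k by (auto simp: y_def abs_if)
  have "k * sinh y \<le> sinh (k * y)" using mult_sinh_le_sinh_mult[OF k y] .
  then have "(k * sinh y)\<^sup>2 \<le> (sinh (k * y))\<^sup>2" using k y by (intro power_mono) auto
  then show "k\<^sup>2 * (sinh l)\<^sup>2 \<le> (sinh (k * l))\<^sup>2" by (simp add: S T power_mult_distrib)
  show "(sinh (k * l))\<^sup>2 - k\<^sup>2 * (sinh l)\<^sup>2 \<le> (k\<^sup>2 - 1) / 3 * (sinh l)\<^sup>2 * (sinh (k * l))\<^sup>2"
  proof (cases "y = 0")
    case False
    define A B where "A = (sinh y)\<^sup>2" and "B = (sinh (k * y))\<^sup>2"
    have A: "0 < A" and B: "0 < B" using False y k by (auto simp: A_def B_def)
    have "B = 1 / A * (A * B)" using A by simp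
    also have "\<dots> \<le> (k\<^sup>2 / B + (k\<^sup>2 - 1) / 3) * (A * B)"
      using inverse_sinh_sq_le[OF k] False y A B unfolding A_def B_def
      by (intro mult_right_mono) auto
    also have "\<dots> = k\<^sup>2 * A + (k\<^sup>2 - 1) / 3 * A * B" using B by (simp add: field_simps)
    finally show ?thesis by (simp add: S T A_def B_def)
  qed (simp add: S T)
qed

section \<open>The two comparison inequalities in reduced form\<close>

lemma sin_sq_add_cross_le:
  fixes k A B h m :: real
  assumes k: "1 \<le> k" and A: "0 \<le> A" and AB: "k\<^sup>2 * A \<le> B"
    and h: "0 \<le> h" "h \<le> m" and km: "k * (m + h) < pi"
  shows "(A + (sin h)\<^sup>2) * (B + (sin (k * m))\<^sup>2) \<le> (B + (sin (k * h))\<^sup>2) * (A + (sin m)\<^sup>2)"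
proof -
  have "m + h \<le> k * (m + h)" "m - h \<le> k * (m - h)" "k * (m - h) \<le> k * (m + h)"
    using k h by (auto simp: mult_le_cancel_right1 intro: mult_left_mono)
  then have angles: "0 \<le> m - h" "k * (m - h) \<le> pi" "m + h \<le> pi" "k * (m + h) \<le> pi"
    using h km by linarith+
  then have sin_nonneg: "0 \<le> sin (m + h)" "0 \<le> sin (m - h)"
      "0 \<le> sin (k * (m + h))" "0 \<le> sin (k * (m - h))"
    using h k by (auto intro!: sin_ge_zero)
  have "sin (k * (m + h)) * sin (k * (m - h)) \<le> (k * sin (m + h)) * (k * sin (m - h))"
    using sin_nonneg angles h k by (intro mult_mono sin_mult_le) auto
  then have Q_le_P: "(sin (k * m))\<^sup>2 - (sin (k * h))\<^sup>2 \<le> k\<^sup>2 * ((sin m)\<^sup>2 - (sin h)\<^sup>2)"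
    unfolding sin_sq_diff by (simp add: algebra_simps power2_eq_square)
  have P: "0 \<le> (sin m)\<^sup>2 - (sin h)\<^sup>2"
    unfolding sin_sq_diff using sin_nonneg by simp
  have "A * ((sin (k * m))\<^sup>2 - (sin (k * h))\<^sup>2) \<le> A * (k\<^sup>2 * ((sin m)\<^sup>2 - (sin h)\<^sup>2))"
    using Q_le_P A by (rule mult_left_mono)
  also have "\<dots> = (k\<^sup>2 * A) * ((sin m)\<^sup>2 - (sin h)\<^sup>2)" by simp
  also have "\<dots> \<le> B * ((sin m)\<^sup>2 - (sin h)\<^sup>2)" using AB P by (rule mult_right_mono)
  finally have AB_part: "A * ((sin (k * m))\<^sup>2 - (sin (k * h))\<^sup>2) \<le> B * ((sin m)\<^sup>2 - (sin h)\<^sup>2)" .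
  have km': "k * m < pi" using km mult_left_mono[of m "m + h" k] k h by linarith
  then have "sin h * sin (k * m) \<le> sin (k * h) * sin m"
    using k h by (intro sin_mult_ratio_antimono)
  moreover have "0 \<le> sin h" "0 \<le> sin (k * m)"
    using angles km' h k by (auto intro!: sin_ge_zero)
  ultimately have "(sin h * sin (k * m))\<^sup>2 \<le> (sin (k * h) * sin m)\<^sup>2"
    by (intro power_mono) auto
  with AB_part show ?thesis
    by (simp add: power_mult_distrib algebra_simps)
qed

text \<open>Here \<open>A\<close>, \<open>B\<close> play the roles of \<open>sinh\<^sup>2 l\<close>, \<open>sinh\<^sup>2 (k l)\<close>, and \<open>P\<^sub>i\<close>, \<open>Q\<^sub>i\<close> of the squared
  sines at scale \<open>1\<close> and \<open>k\<close>.\<close>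
lemma cross_product_le_scaled:
  fixes A B P1 P2 Q1 Q2 K \<kappa> C :: real
  assumes A: "0 \<le> A" and B: "0 \<le> B" and C: "1 \<le> C" and \<kappa>: "0 \<le> \<kappa>"
    and P1: "0 \<le> P1" and Q1: "0 \<le> Q1"
    and AB: "B - K * A \<le> \<kappa> * A * B"
    and PQ: "Q1 * P2 \<le> C * P1 * Q2" and Q: "Q1 \<le> Q2"
    and KPQ: "K * P2 + Q1 \<le> C * Q2 + K * C * P1" and \<kappa>P: "\<kappa> * P2 \<le> C - 1"
  shows "(B + Q1) * (A + P2) \<le> C * (A + P1) * (B + Q2)"
proof -
  have diff: "C * (A + P1) * (B + Q2) - (B + Q1) * (A + P2)
      = (A * B * (C - 1) + A * (C * Q2 - Q1) + B * (C * P1 - P2)) + (C * P1 * Q2 - Q1 * P2)"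
    by (simp add: algebra_simps)
  have "Q2 \<le> C * Q2" using C Q Q1 by (simp add: mult_le_cancel_right1)
  then have AQ: "0 \<le> A * (C * Q2 - Q1)" using A Q by simp
  have ABC: "0 \<le> A * B * (C - 1)" using A B C by simp
  have "0 \<le> A * B * (C - 1) + A * (C * Q2 - Q1) + B * (C * P1 - P2)"
  proof (cases "P2 \<le> C * P1")
    case True
    then show ?thesis using AQ ABC B by simp
  next
    case False
    then have P: "0 \<le> P2 - C * P1" by simp
    have "B * (P2 - C * P1) \<le> (K * A + \<kappa> * A * B) * (P2 - C * P1)"
      using AB P by (intro mult_right_mono) auto
    also have "\<dots> = A * (K * P2 - K * C * P1) + A * B * (\<kappa> * (P2 - C * P1))"
      by (simp add: algebra_simps)
    also have "\<dots> \<le> A * (C * Q2 - Q1) + A * B * (C - 1)"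
    proof (intro add_mono mult_left_mono)
      have "\<kappa> * (P2 - C * P1) \<le> \<kappa> * P2" using \<kappa> C P1 by (simp add: right_diff_distrib)
      then show "\<kappa> * (P2 - C * P1) \<le> C - 1" using \<kappa>P by linarith
    qed (use KPQ A B in auto)
    finally show ?thesis unfolding right_diff_distrib by linarith
  qed
  then show ?thesis using diff PQ by linarith
qed

lemma sin_pi_div_two_mult_bounds:
  fixes k :: real
  assumes k: "1 \<le> k"
  shows "3 \<le> (sin (pi / (2 * k)))\<^sup>2 * (2 * k\<^sup>2 + 1)" and "1 \<le> k\<^sup>2 * (sin (pi / (2 * k)))\<^sup>2"
proof -
  have t: "0 < pi / (2 * k)" "pi / (2 * k) \<le> pi / 2" using k by (auto simp: field_simps)
  have "pi\<^sup>2 / (2 * (pi / (2 * k))\<^sup>2) = 2 * k\<^sup>2" using k by (simp add: power2_eq_square field_simps)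
  then show w3: "3 \<le> (sin (pi / (2 * k)))\<^sup>2 * (2 * k\<^sup>2 + 1)" using sin_sq_lower_bound[OF t] by simp
  have "1 \<le> k\<^sup>2" using k by (simp add: one_le_power)
  then have "(sin (pi / (2 * k)))\<^sup>2 * (2 * k\<^sup>2 + 1) \<le> 3 * (k\<^sup>2 * (sin (pi / (2 * k)))\<^sup>2)"
    using mult_right_mono[of 1 "k\<^sup>2" "(sin (pi / (2 * k)))\<^sup>2"] by (simp add: algebra_simps)
  with w3 show "1 \<le> k\<^sup>2 * (sin (pi / (2 * k)))\<^sup>2" by linarith
qed

lemma sin_le_sin_pi_div_two_mult:
  fixes k m :: real
  assumes k: "1 \<le> k" and m: "0 \<le> m" and km: "k * m \<le> pi / 2"
  shows "sin m \<le> sin (pi / (2 * k)) * sin (k * m)"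
proof -
  have "k * m \<le> k * (pi / (2 * k))" using km k by simp
  then have "m \<le> pi / (2 * k)" by (rule mult_left_le_imp_le) (use k in simp)
  then have "sin m * sin (k * (pi / (2 * k))) \<le> sin (k * m) * sin (pi / (2 * k))"
    using k m by (intro sin_mult_ratio_antimono) auto
  then show ?thesis using k by (simp add: mult.commute)
qed

lemma sin_sq_add_cross_le_const:
  fixes k A B h m :: real
  assumes k: "1 \<le> k" and A: "0 \<le> A" and B: "0 \<le> B"
    and AB: "B - k\<^sup>2 * A \<le> (k\<^sup>2 - 1) / 3 * A * B"
    and h: "0 \<le> h" "h \<le> m" and km: "k * m \<le> pi / 2"
  shows "(B + (sin (k * h))\<^sup>2) * (A + (sin m)\<^sup>2)
    \<le> (k * sin (pi / (2 * k)))\<^sup>2 * (A + (sin h)\<^sup>2) * (B + (sin (k * m))\<^sup>2)"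
proof -
  define w where "w = sin (pi / (2 * k))"
  note w = sin_pi_div_two_mult_bounds[OF k, folded w_def]
  have k2: "1 \<le> k\<^sup>2" using k by (simp add: one_le_power)
  have kh: "0 \<le> k * h" "k * h \<le> k * m" using k h by simp_all
  then have angles: "0 \<le> m" "m \<le> pi / 2" "k * h \<le> pi / 2" "0 \<le> k * m"
    using h km mult_right_mono[of 1 k m] k by - linarith+
  have sin_nonneg: "0 \<le> sin h" "0 \<le> sin m" "0 \<le> sin (k * h)" "0 \<le> sin (k * m)" "0 \<le> w"
    using h angles km k unfolding w_def by (auto intro!: sin_ge_zero simp: field_simps)
  have sin_m: "sin m \<le> w * sin (k * m)"
    using sin_le_sin_pi_div_two_mult[OF k angles(1) km] by (simp add: w_def)
  have sin_kh: "sin (k * h) \<le> k * sin h" using k h angles by (intro sin_mult_le) auto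
  have "sin (k * h) * sin m \<le> (k * sin h) * (w * sin (k * m))"
    using sin_m sin_kh sin_nonneg by (intro mult_mono) auto
  then have "(sin (k * h) * sin m)\<^sup>2 \<le> ((k * sin h) * (w * sin (k * m)))\<^sup>2"
    using sin_nonneg by (intro power_mono) auto
  then have PQ: "(sin (k * h))\<^sup>2 * (sin m)\<^sup>2 \<le> k\<^sup>2 * w\<^sup>2 * (sin h)\<^sup>2 * (sin (k * m))\<^sup>2"
    by (simp add: power_mult_distrib algebra_simps)
  have "sin (k * h) \<le> sin (k * m)" using angles kh km by (intro sin_monotone_2pi_le) auto
  then have Q: "(sin (k * h))\<^sup>2 \<le> (sin (k * m))\<^sup>2" using sin_nonneg by (intro power_mono) auto
  have "(sin m)\<^sup>2 \<le> w\<^sup>2 * (sin (k * m))\<^sup>2"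
    using power_mono[OF sin_m, of 2] sin_nonneg by (simp add: power_mult_distrib)
  then have "k\<^sup>2 * (sin m)\<^sup>2 \<le> k\<^sup>2 * w\<^sup>2 * (sin (k * m))\<^sup>2"
    using mult_left_mono[of _ _ "k\<^sup>2"] by (simp add: mult.assoc)
  moreover have "(sin (k * h))\<^sup>2 \<le> k\<^sup>2 * (sin h)\<^sup>2"
    using power_mono[OF sin_kh, of 2] sin_nonneg by (simp add: power_mult_distrib)
  moreover have "k\<^sup>2 * (sin h)\<^sup>2 \<le> k\<^sup>2 * (k\<^sup>2 * w\<^sup>2) * (sin h)\<^sup>2"
    using mult_left_mono[OF w(2), of "k\<^sup>2 * (sin h)\<^sup>2"] by (simp add: algebra_simps)
  ultimately have KPQ: "k\<^sup>2 * (sin m)\<^sup>2 + (sin (k * h))\<^sup>2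
      \<le> k\<^sup>2 * w\<^sup>2 * (sin (k * m))\<^sup>2 + k\<^sup>2 * (k\<^sup>2 * w\<^sup>2) * (sin h)\<^sup>2"
    by linarith
  have "sin m \<le> w" using sin_m mult_left_le[OF sin_le_one[of "k * m"] sin_nonneg(5)] by linarith
  then have "(sin m)\<^sup>2 \<le> w\<^sup>2" using sin_nonneg by (intro power_mono) auto
  then have "(k\<^sup>2 - 1) / 3 * (sin m)\<^sup>2 \<le> (k\<^sup>2 - 1) / 3 * w\<^sup>2"
    using k2 by (intro mult_left_mono) auto
  with w(1) have \<kappa>P: "(k\<^sup>2 - 1) / 3 * (sin m)\<^sup>2 \<le> k\<^sup>2 * w\<^sup>2 - 1"
    by (simp add: field_simps)
  have "(B + (sin (k * h))\<^sup>2) * (A + (sin m)\<^sup>2)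
      \<le> k\<^sup>2 * w\<^sup>2 * (A + (sin h)\<^sup>2) * (B + (sin (k * m))\<^sup>2)"
    using k2 by (intro cross_product_le_scaled[OF A B w(2) _ _ _ AB PQ Q KPQ \<kappa>P]) auto
  then show ?thesis by (simp add: w_def power_mult_distrib)
qed

lemma sqrt_div_sqrt_le:
  fixes a b c d :: real
  assumes "0 < b" "0 < d" "a * d \<le> c * b"
  shows "sqrt a / sqrt b \<le> sqrt c / sqrt d"
proof -
  have "a / b \<le> c / d" using assms by (simp add: field_simps)
  then show ?thesis by (simp add: real_sqrt_divide[symmetric])
qed

lemma sinh_sin_ratio_le:
  fixes k l h m :: real
  assumes k: "1 \<le> k" and h: "0 \<le> h" "h \<le> m" and m: "0 < m" and km: "k * (m + h) < pi"
  shows "sqrt ((sinh l)\<^sup>2 + (sin h)\<^sup>2) / sqrt ((sinh l)\<^sup>2 + (sin m)\<^sup>2)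
    \<le> sqrt ((sinh (k * l))\<^sup>2 + (sin (k * h))\<^sup>2) / sqrt ((sinh (k * l))\<^sup>2 + (sin (k * m))\<^sup>2)"
proof (rule sqrt_div_sqrt_le)
  have "m \<le> k * m" "k * m \<le> k * (m + h)" using k h m by (auto simp: mult_le_cancel_right1)
  then have "m < pi" "k * m < pi" using km by linarith+
  then have "0 < sin m" "0 < sin (k * m)" using m k by (auto intro!: sin_gt_zero)
  then show "0 < (sinh l)\<^sup>2 + (sin m)\<^sup>2" "0 < (sinh (k * l))\<^sup>2 + (sin (k * m))\<^sup>2"
    by (auto intro: add_nonneg_pos)
  show "((sinh l)\<^sup>2 + (sin h)\<^sup>2) * ((sinh (k * l))\<^sup>2 + (sin (k * m))\<^sup>2)
      \<le> ((sinh (k * l))\<^sup>2 + (sin (k * h))\<^sup>2) * ((sinh l)\<^sup>2 + (sin m)\<^sup>2)"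
    using k h km sinh_mult_sq_bounds(1)[OF k] by (intro sin_sq_add_cross_le) auto
qed

lemma sinh_sin_ratio_le_const:
  fixes k l h m :: real
  assumes k: "1 \<le> k" and h: "0 \<le> h" "h \<le> m" and m: "0 < m" and km: "k * m \<le> pi / 2"
  shows "sqrt ((sinh (k * l))\<^sup>2 + (sin (k * h))\<^sup>2) / sqrt ((sinh (k * l))\<^sup>2 + (sin (k * m))\<^sup>2)
    \<le> k * sin (pi / (2 * k)) * (sqrt ((sinh l)\<^sup>2 + (sin h)\<^sup>2) / sqrt ((sinh l)\<^sup>2 + (sin m)\<^sup>2))"
proof -
  define C where "C = k * sin (pi / (2 * k))"
  have "0 < pi / (2 * k)" "pi / (2 * k) \<le> pi" using k by (auto simp: field_simps)
  then have C: "0 \<le> C" using k by (simp add: C_def sin_ge_zero)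
  have "sqrt ((sinh (k * l))\<^sup>2 + (sin (k * h))\<^sup>2) / sqrt ((sinh (k * l))\<^sup>2 + (sin (k * m))\<^sup>2)
      \<le> sqrt (C\<^sup>2 * ((sinh l)\<^sup>2 + (sin h)\<^sup>2)) / sqrt ((sinh l)\<^sup>2 + (sin m)\<^sup>2)"
  proof (rule sqrt_div_sqrt_le)
    have "m \<le> k * m" using k m by (simp add: mult_le_cancel_right1)
    then have "m < pi" "k * m < pi" using km pi_gt_zero by linarith+
    then have "0 < sin m" "0 < sin (k * m)" using m k by (auto intro!: sin_gt_zero)
    then show "0 < (sinh l)\<^sup>2 + (sin m)\<^sup>2" "0 < (sinh (k * l))\<^sup>2 + (sin (k * m))\<^sup>2"
      by (auto intro: add_nonneg_pos)
    show "((sinh (k * l))\<^sup>2 + (sin (k * h))\<^sup>2) * ((sinh l)\<^sup>2 + (sin m)\<^sup>2)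
        \<le> C\<^sup>2 * ((sinh l)\<^sup>2 + (sin h)\<^sup>2) * ((sinh (k * l))\<^sup>2 + (sin (k * m))\<^sup>2)"
      unfolding C_def using k h km sinh_mult_sq_bounds(2)[OF k]
      by (intro sin_sq_add_cross_le_const) auto
  qed
  also have "\<dots> = C * (sqrt ((sinh l)\<^sup>2 + (sin h)\<^sup>2) / sqrt ((sinh l)\<^sup>2 + (sin m)\<^sup>2))"
    using C by (simp add: real_sqrt_mult)
  finally show ?thesis by (simp add: C_def)
qed

section \<open>Polar form of the two metrics\<close>

lemma norm_rcis_diff:
  assumes r: "0 < r" and p: "0 < p"
  shows "cmod (rcis r a - rcis p b)
    = 2 * sqrt (r * p) * sqrt ((sinh (ln (r / p) / 2))\<^sup>2 + (sin ((a - b) / 2))\<^sup>2)"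
proof -
  have "(cmod (rcis r a - rcis p b))\<^sup>2 = (r * cos a - p * cos b)\<^sup>2 + (r * sin a - p * sin b)\<^sup>2"
    by (simp add: cmod_power2)
  also have "\<dots> = r\<^sup>2 + p\<^sup>2 - 2 * r * p * cos (a - b)"
    by (simp add: power2_diff power_mult_distrib sin_squared_eq algebra_simps cos_diff)
  also have "\<dots> = 4 * (r * p) * ((sinh (ln (r / p) / 2))\<^sup>2 + (sin ((a - b) / 2))\<^sup>2)"
  proof -
    define S where "S = sinh (ln (r / p) / 2)"
    have "(r / p + p / r) / 2 = 1 + 2 * S\<^sup>2"
      using cosh_ln_real[of "r / p"] cosh_double[of "ln (r / p) / 2"] cosh_square_eq[of "ln (r / p) / 2"]
        r p by (simp add: S_def field_simps)
    then have "r\<^sup>2 + p\<^sup>2 = 2 * r * p + 4 * r * p * S\<^sup>2" using r p by (simp add: field_simps power2_eq_square)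
    moreover have half: "cos x = 1 - 2 * (sin (x / 2))\<^sup>2" for x :: real
      using cos_double_sin[of "x / 2"] by simp
    ultimately show ?thesis unfolding S_def[symmetric] half[of "a - b"] by (simp add: algebra_simps)
  qed
  finally have "sqrt (4 * (r * p) * ((sinh (ln (r / p) / 2))\<^sup>2 + (sin ((a - b) / 2))\<^sup>2))
      = cmod (rcis r a - rcis p b)"
    by (rule real_sqrt_unique) simp
  then show ?thesis by (simp add: real_sqrt_mult)
qed

lemma tanh_artanh_real:
  fixes q :: real
  assumes "\<bar>q\<bar> < 1"
  shows "tanh (artanh q) = q"
proof -
  define z where "z = (1 + q) / (1 - q)"
  have z: "0 < z" using assms by (auto simp: z_def)
  have "tanh (artanh q) = tanh (ln (sqrt z))" using z by (simp add: artanh_def z_def ln_sqrt)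
  also have "\<dots> = (z - 1) / (z + 1)" using tanh_ln_real[of "sqrt z"] z by simp
  also have "\<dots> = q" using assms by (simp add: z_def field_simps)
  finally show ?thesis .
qed

lemma rcis_powr:
  assumes r: "0 < r" and a: "- pi < a" "a \<le> pi"
  shows "rcis r a powr (of_real k) = rcis (r powr k) (k * a)"
proof -
  have nz: "rcis r a \<noteq> 0" using r by simp
  have "Ln (rcis r a) = of_real (ln r) + \<i> * of_real a"
    using Ln_Arg[OF nz] Arg_rcis[of a r] r a by (simp add: rcis_def norm_mult)
  then have "rcis r a powr (of_real k) = exp (of_real (k * ln r)) * exp (\<i> * of_real (k * a))"
    using nz by (simp add: powr_def algebra_simps flip: exp_add)
  also have "\<dots> = rcis (r powr k) (k * a)"
    using r by (simp add: rcis_def cis_conv_exp powr_def flip: exp_of_real)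
  finally show ?thesis .
qed

lemma tanh_rho_S_polar:
  assumes \<theta>: "0 < \<theta>" "\<theta> \<le> pi" and r: "0 < r" and p: "0 < p"
    and a: "0 < a" "a < \<theta>" and b: "0 < b" "b < \<theta>"
  defines "k \<equiv> pi / \<theta>"
  defines "T \<equiv> sinh (k * ln (r / p) / 2)"
  shows "tanh (rho_S \<theta> (rcis r a) (rcis p b) / 2)
    = sqrt (T\<^sup>2 + (sin (k * (a - b) / 2))\<^sup>2) / sqrt (T\<^sup>2 + (sin (k * (a + b) / 2))\<^sup>2)"
proof -
  define R P where "R = r powr k" and "P = p powr k"
  have RP: "0 < R" "0 < P" "ln (R / P) / 2 = k * ln (r / p) / 2"
    using r p by (simp_all add: R_def P_def ln_div algebra_simps)
  have ka: "0 < k * a" "k * a < pi" and kb: "0 < k * b" "k * b < pi"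
    using a b \<theta> by (auto simp: k_def field_simps)
  have "rcis r a powr of_real (pi / \<theta>) = rcis R (k * a)"
    unfolding R_def k_def using r a \<theta> by (intro rcis_powr) auto
  moreover have "rcis p b powr of_real (pi / \<theta>) = rcis P (k * b)"
    unfolding P_def k_def using p b \<theta> by (intro rcis_powr) auto
  moreover have "cnj (rcis P (k * b)) = rcis P (- (k * b))" by (simp add: rcis_def cis_cnj)
  ultimately have "rho_S \<theta> (rcis r a) (rcis p b) = 2 * artanh (cmod (rcis R (k * a) - rcis P (k * b))
      / cmod (rcis R (k * a) - rcis P (- (k * b))))"
    by (simp add: rho_S_def rho_H_def)
  also have "cmod (rcis R (k * a) - rcis P (k * b)) / cmod (rcis R (k * a) - rcis P (- (k * b)))
      = sqrt (T\<^sup>2 + (sin (k * (a - b) / 2))\<^sup>2) / sqrt (T\<^sup>2 + (sin (k * (a + b) / 2))\<^sup>2)"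
    using RP by (simp add: norm_rcis_diff T_def algebra_simps)
  finally have rho: "rho_S \<theta> (rcis r a) (rcis p b) / 2 = artanh (\<dots>)" by simp
  define N D where "N = T\<^sup>2 + (sin (k * (a - b) / 2))\<^sup>2" and "D = T\<^sup>2 + (sin (k * (a + b) / 2))\<^sup>2"
  have "k * (a + b) / 2 + k * (a - b) / 2 = k * a" "k * (a + b) / 2 - k * (a - b) / 2 = k * b"
    by (simp_all add: field_simps)
  then have "D - N = sin (k * a) * sin (k * b)"
    unfolding N_def D_def by (simp only: sin_sq_diff add_diff_add diff_self add_0)
  moreover have "0 < sin (k * a) * sin (k * b)" using ka kb by (simp add: sin_gt_zero)
  moreover have "0 \<le> N" by (simp add: N_def)
  ultimately have "\<bar>sqrt N / sqrt D\<bar> < 1" by (simp add: divide_less_eq_1_pos)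
  then show ?thesis unfolding rho N_def D_def by (rule tanh_artanh_real)
qed

section \<open>Detours through the boundary of a sector\<close>

definition frontier_detour :: "complex set \<Rightarrow> complex \<Rightarrow> complex \<Rightarrow> real" where
  "frontier_detour G x y = (INF z\<in>frontier G. cmod (x - z) + cmod (z - y))"

lemma s_metric_eq_detour: "s_metric G x y = cmod (x - y) / frontier_detour G x y"
  by (simp add: s_metric_def frontier_detour_def)

lemma frontier_detour_le:
  assumes "z \<in> frontier G"
  shows "frontier_detour G x y \<le> cmod (x - z) + cmod (z - y)"
  unfolding frontier_detour_def by (rule cINF_lower[OF bdd_belowI[of _ 0] assms]) auto

lemma mem_sector_iff:
  assumes \<theta>: "0 < \<theta>" "\<theta> < pi"
  shows "x \<in> sector \<theta> \<longleftrightarrow> 0 < Im x \<and> Im (x * cnj (cis \<theta>)) < 0"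
proof (cases "x = 0")
  case False
  define r a where "r = cmod x" and "a = Arg x"
  have r: "0 < r" and x: "x = rcis r a" and a: "- pi < a" "a \<le> pi"
    using False Arg_bounded[of x] by (auto simp: r_def a_def rcis_cmod_Arg)
  have "x * cnj (cis \<theta>) = rcis r (a - \<theta>)" by (simp add: x rcis_def cis_cnj mult.assoc cis_mult)
  then have Im: "Im x = r * sin a" "Im (x * cnj (cis \<theta>)) = r * sin (a - \<theta>)" by (simp_all add: x)
  have sin_swap: "sin (a - \<theta>) = - sin (\<theta> - a)" by (metis minus_diff_eq sin_minus)
  have "0 < a \<and> a < \<theta> \<longleftrightarrow> 0 < sin a \<and> sin (a - \<theta>) < 0"
  proof
    assume "0 < a \<and> a < \<theta>"
    then show "0 < sin a \<and> sin (a - \<theta>) < 0"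
      using \<theta> sin_gt_zero[of a] sin_gt_zero[of "\<theta> - a"] by (simp add: sin_swap)
  next
    assume s: "0 < sin a \<and> sin (a - \<theta>) < 0"
    then have "0 < a" using a sin_ge_zero[of "- a"] by (cases "a \<le> 0") auto
    moreover have "a < \<theta>" using s a \<theta> sin_ge_zero[of "a - \<theta>"] by (cases "\<theta> \<le> a") auto
    ultimately show "0 < a \<and> a < \<theta>" ..
  qed
  also have "\<dots> \<longleftrightarrow> 0 < Im x \<and> Im (x * cnj (cis \<theta>)) < 0"
    unfolding Im using r by (simp add: zero_less_mult_iff mult_less_0_iff)
  finally show ?thesis by (simp add: sector_def a_def)
qed (simp add: sector_def Arg_zero)

lemma open_sector:
  assumes "0 < \<theta>" "\<theta> < pi"
  shows "open (sector \<theta>)"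
proof -
  have "sector \<theta> = {x. 0 < Im x} \<inter> {x. Im (x * cnj (cis \<theta>)) < 0}"
    using mem_sector_iff[OF assms] by auto
  then show ?thesis by (auto intro!: open_Int open_Collect_less continuous_intros)
qed

lemma closure_sector_subset:
  assumes "0 < \<theta>" "\<theta> < pi"
  shows "closure (sector \<theta>) \<subseteq> {x. 0 \<le> Im x \<and> Im (x * cnj (cis \<theta>)) \<le> 0}"
proof (rule closure_minimal)
  show "sector \<theta> \<subseteq> {x. 0 \<le> Im x \<and> Im (x * cnj (cis \<theta>)) \<le> 0}"
    using mem_sector_iff[OF assms] by auto
  show "closed {x. 0 \<le> Im x \<and> Im (x * cnj (cis \<theta>)) \<le> 0}"
    unfolding Collect_conj_eq by (intro closed_Int closed_Collect_le continuous_intros)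
qed

lemma mem_closure_sector:
  assumes \<theta>: "0 < \<theta>" "\<theta> < pi" and z: "0 \<le> Im z" "Im (z * cnj (cis \<theta>)) \<le> 0"
  shows "z \<in> closure (sector \<theta>)"
  unfolding closure_approachable
proof (intro allI impI)
  fix e :: real assume e: "0 < e"
  define y where "y = z + of_real (e / 2) * cis (\<theta> / 2)"
  have "0 < e / 2 * sin (\<theta> / 2)" using e \<theta> by (simp add: sin_gt_zero)
  moreover have "cis (\<theta> / 2) * cnj (cis \<theta>) = cis (- (\<theta> / 2))" by (simp add: cis_cnj cis_mult)
  then have "Im (y * cnj (cis \<theta>)) = Im (z * cnj (cis \<theta>)) - e / 2 * sin (\<theta> / 2)"
    by (simp add: y_def distrib_right mult.assoc)
  ultimately have "y \<in> sector \<theta>" using z by (simp add: mem_sector_iff[OF \<theta>] y_def)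
  moreover have "dist y z < e" using e by (simp add: y_def dist_norm norm_mult)
  ultimately show "\<exists>y\<in>sector \<theta>. dist y z < e" by blast
qed

lemma frontier_sector_subset:
  assumes \<theta>: "0 < \<theta>" "\<theta> < pi" and z: "z \<in> frontier (sector \<theta>)"
  shows "Im z = 0 \<or> Im (z * cnj (cis \<theta>)) = 0"
proof -
  have "z \<in> closure (sector \<theta>)" "z \<notin> sector \<theta>"
    using z interior_open[OF open_sector[OF \<theta>]] by (auto simp: frontier_def)
  then show ?thesis using closure_sector_subset[OF \<theta>] mem_sector_iff[OF \<theta>] by fastforce
qed

lemma rays_in_frontier_sector:
  assumes \<theta>: "0 < \<theta>" "\<theta> < pi" and t: "0 \<le> t"
  shows "complex_of_real t \<in> frontier (sector \<theta>)"
    and "complex_of_real t * cis \<theta> \<in> frontier (sector \<theta>)"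
proof -
  have "cis \<theta> * cnj (cis \<theta>) = 1" by (simp add: cis_cnj cis_mult)
  then have Im_ray: "Im (complex_of_real t * cis \<theta> * cnj (cis \<theta>)) = 0" by (simp add: mult.assoc)
  have "0 \<le> sin \<theta>" using \<theta> by (simp add: sin_ge_zero)
  then have "complex_of_real t \<in> closure (sector \<theta>)"
    "complex_of_real t * cis \<theta> \<in> closure (sector \<theta>)"
    using t Im_ray by (auto intro!: mem_closure_sector[OF \<theta>])
  moreover have "complex_of_real t \<notin> sector \<theta>" "complex_of_real t * cis \<theta> \<notin> sector \<theta>"
    using Im_ray by (simp_all add: mem_sector_iff[OF \<theta>])
  ultimately show "complex_of_real t \<in> frontier (sector \<theta>)"
    and "complex_of_real t * cis \<theta> \<in> frontier (sector \<theta>)"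
    using interior_open[OF open_sector[OF \<theta>]] by (auto simp: frontier_def)
qed

lemma norm_diff_reflection:
  assumes w: "cmod w = 1" and z: "Im (z * cnj w) = 0"
  shows "cmod (z - y) = cmod (z - w\<^sup>2 * cnj y)"
proof -
  define u where "u = z * cnj w"
  have ww: "w * cnj w = 1" using w complex_norm_square[of w] by simp
  have u: "cnj u = u" using z by (simp add: u_def complex_eq_iff)
  have "w * u = z" using ww by (simp add: u_def mult.left_commute)
  then have "cmod (z - w\<^sup>2 * cnj y) = cmod (w * (u - w * cnj y))"
    by (simp add: power2_eq_square right_diff_distrib mult.assoc)
  also have "\<dots> = cmod (u - w * cnj y)" using w by (simp add: norm_mult)
  also have "\<dots> = cmod (cnj (u - w * cnj y))" by (rule complex_mod_cnj[symmetric])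
  also have "cnj (u - w * cnj y) = cnj w * (z - y)" using u by (simp add: u_def algebra_simps)
  also have "cmod \<dots> = cmod (z - y)" using w by (simp add: norm_mult)
  finally show ?thesis ..
qed

lemma sector_detour_ge:
  assumes \<theta>: "0 < \<theta>" "\<theta> < pi"
  shows "min (cmod (x - cnj y)) (cmod (x - (cis \<theta>)\<^sup>2 * cnj y)) \<le> frontier_detour (sector \<theta>) x y"
  unfolding frontier_detour_def
proof (rule cINF_greatest)
  show "frontier (sector \<theta>) \<noteq> {}" using rays_in_frontier_sector(1)[OF \<theta>, of 0] by auto
  fix z assume z: "z \<in> frontier (sector \<theta>)"
  obtain w where w: "w = 1 \<or> w = cis \<theta>" and zw: "Im (z * cnj w) = 0"
  proof (cases "Im z = 0")
    case True
    then show ?thesis using that[of 1] by simp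
  next
    case False
    then show ?thesis using that[of "cis \<theta>"] frontier_sector_subset[OF \<theta> z] by simp
  qed
  have "cmod w = 1" using w by auto
  then have "cmod (z - y) = cmod (z - w\<^sup>2 * cnj y)" using zw by (rule norm_diff_reflection)
  moreover have "cmod (x - w\<^sup>2 * cnj y) \<le> cmod (x - z) + cmod (z - w\<^sup>2 * cnj y)"
    using norm_triangle_ineq[of "x - z" "z - w\<^sup>2 * cnj y"] by simp
  moreover have "min (cmod (x - cnj y)) (cmod (x - (cis \<theta>)\<^sup>2 * cnj y)) \<le> cmod (x - w\<^sup>2 * cnj y)"
    using w by auto
  ultimately show "min (cmod (x - cnj y)) (cmod (x - (cis \<theta>)\<^sup>2 * cnj y)) \<le> cmod (x - z) + cmod (z - y)"
    by linarith
qed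

lemma real_axis_crossing:
  assumes r: "0 < r" and p: "0 < p" and a: "0 < a" and b: "0 < b" and ab: "a + b \<le> pi"
  shows "\<exists>t\<ge>0. cmod (rcis r a - of_real t) + cmod (of_real t - rcis p b) = cmod (rcis r a - cnj (rcis p b))"
proof -
  define x y where "x = rcis r a" and "y = rcis p b"
  have "a < pi" "b < pi" using a b ab by linarith+
  then have "0 < sin a" "0 < sin b" using a b by (simp_all add: sin_gt_zero)
  moreover have "0 \<le> sin (a + b)" using a b ab by (simp add: sin_ge_zero)
  moreover have "Re x * Im y + Re y * Im x = r * p * sin (a + b)"
    by (simp add: x_def y_def sin_add algebra_simps)
  ultimately have Im: "0 < Im x" "0 < Im y" and Re: "0 \<le> Re x * Im y + Re y * Im x"
    using r p by (simp_all add: x_def y_def)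
  define s where "s = Im x + Im y"
  \<comment> \<open>the segment from \<open>x\<close> to \<open>cnj y\<close> meets the real axis in the ratio \<open>Im x : Im y\<close>\<close>
  define t where "t = (Re x * Im y + Re y * Im x) / s"
  have s: "0 < s" using Im by (simp add: s_def)
  have "x - of_real t = of_real (Im x / s) * (x - cnj y)"
    and "of_real t - cnj y = of_real (Im y / s) * (x - cnj y)"
    using s by (simp_all add: complex_eq_iff t_def s_def field_simps)
  moreover have "cmod (of_real t - y) = cmod (of_real t - cnj y)"
    by (metis complex_cnj_complex_of_real complex_cnj_diff complex_mod_cnj)
  ultimately have "cmod (x - of_real t) + cmod (of_real t - y)
      = Im x / s * cmod (x - cnj y) + Im y / s * cmod (x - cnj y)"
    using Im s by (simp only: norm_mult norm_of_real) simp
  also have "\<dots> = (Im x + Im y) / s * cmod (x - cnj y)" by (simp add: add_divide_distrib distrib_right)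
  also have "\<dots> = cmod (x - cnj y)" using s by (simp add: s_def)
  finally have "cmod (x - of_real t) + cmod (of_real t - y) = cmod (x - cnj y)" .
  moreover have "0 \<le> t" using s Re by (simp add: t_def)
  ultimately show ?thesis unfolding x_def y_def by (intro exI[of _ t] conjI)
qed

lemma sector_detour_le_conj:
  assumes \<theta>: "0 < \<theta>" "\<theta> < pi" and r: "0 < r" and p: "0 < p"
    and a: "0 < a" and b: "0 < b" and ab: "a + b \<le> pi"
  shows "frontier_detour (sector \<theta>) (rcis r a) (rcis p b) \<le> cmod (rcis r a - cnj (rcis p b))"
proof -
  obtain t where "0 \<le> t"
    and t: "cmod (rcis r a - of_real t) + cmod (of_real t - rcis p b) = cmod (rcis r a - cnj (rcis p b))"
    using real_axis_crossing[OF r p a b ab] by blast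
  with frontier_detour_le[OF rays_in_frontier_sector(1)[OF \<theta> this(1)], of "rcis r a" "rcis p b"]
  show ?thesis by simp
qed

lemma sector_detour_le_reflection:
  assumes \<theta>: "0 < \<theta>" "\<theta> < pi" and r: "0 < r" and p: "0 < p"
    and a: "a < \<theta>" and b: "b < \<theta>" and ab: "(\<theta> - a) + (\<theta> - b) \<le> pi"
  shows "frontier_detour (sector \<theta>) (rcis r a) (rcis p b) \<le> cmod (rcis r a - (cis \<theta>)\<^sup>2 * cnj (rcis p b))"
proof -
  define \<sigma> where "\<sigma> u = cis \<theta> * cnj u" for u
  have \<sigma>: "cmod (\<sigma> u - \<sigma> v) = cmod (u - v)" for u v
    by (metis \<sigma>_def complex_cnj_diff complex_mod_cnj norm_mult norm_cis mult_1 right_diff_distrib)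
  have x: "rcis r a = \<sigma> (rcis r (\<theta> - a))" and y: "rcis p b = \<sigma> (rcis p (\<theta> - b))"
    by (simp_all add: \<sigma>_def rcis_def cis_cnj mult.left_commute cis_mult)
  have y': "(cis \<theta>)\<^sup>2 * cnj (\<sigma> u) = \<sigma> (cnj u)" for u
    by (simp add: \<sigma>_def power2_eq_square cis_cnj mult.assoc cis_mult)
  have ray: "of_real t * cis \<theta> = \<sigma> (of_real t)" for t
    by (simp add: \<sigma>_def mult.commute)
  obtain t where "0 \<le> t" and t: "cmod (rcis r (\<theta> - a) - of_real t) + cmod (of_real t - rcis p (\<theta> - b))
      = cmod (rcis r (\<theta> - a) - cnj (rcis p (\<theta> - b)))"
    using real_axis_crossing[OF r p _ _ ab] a b by auto
  with frontier_detour_le[OF rays_in_frontier_sector(2)[OF \<theta> this(1)], of "rcis r a" "rcis p b"]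
  show ?thesis unfolding x y y' ray \<sigma> by simp
qed

section \<open>Comparison and sharpness\<close>

lemma sector_polarE:
  assumes "x \<in> sector \<theta>"
  obtains r a where "0 < r" "0 < a" "a < \<theta>" "x = rcis r a"
proof -
  have "0 < Arg x" "Arg x < \<theta>" using assms by (auto simp: sector_def)
  moreover from this have "x \<noteq> 0" by (auto simp: Arg_zero)
  ultimately show thesis using that[of "cmod x" "Arg x"] by (simp add: rcis_cmod_Arg)
qed

lemma rcis_in_sector:
  assumes "0 < r" "0 < a" "a < \<theta>" "\<theta> \<le> pi"
  shows "rcis r a \<in> sector \<theta>"
  using assms Arg_rcis[of a r] by (simp add: sector_def)

lemma sector_polar_identities:
  assumes \<theta>: "0 < \<theta>" "\<theta> < pi" and r: "0 < r" and p: "0 < p"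
    and a: "0 < a" "a < \<theta>" and b: "0 < b" "b < \<theta>"
  defines "k \<equiv> pi / \<theta>" and "l \<equiv> ln (r / p) / 2" and "h \<equiv> \<bar>a - b\<bar> / 2" and "m \<equiv> (a + b) / 2"
  shows "cmod (rcis r a - rcis p b) = 2 * sqrt (r * p) * sqrt ((sinh l)\<^sup>2 + (sin h)\<^sup>2)"
    and "cmod (rcis r a - cnj (rcis p b)) = 2 * sqrt (r * p) * sqrt ((sinh l)\<^sup>2 + (sin m)\<^sup>2)"
    and "cmod (rcis r a - (cis \<theta>)\<^sup>2 * cnj (rcis p b))
      = 2 * sqrt (r * p) * sqrt ((sinh l)\<^sup>2 + (sin (\<theta> - m))\<^sup>2)"
    and "tanh (rho_S \<theta> (rcis r a) (rcis p b) / 2)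
      = sqrt ((sinh (k * l))\<^sup>2 + (sin (k * h))\<^sup>2) / sqrt ((sinh (k * l))\<^sup>2 + (sin (k * m))\<^sup>2)"
proof -
  have sin_abs: "(sin \<bar>u\<bar>)\<^sup>2 = (sin u)\<^sup>2" for u :: real by (cases "0 \<le> u") auto
  have h: "(sin h)\<^sup>2 = (sin ((a - b) / 2))\<^sup>2" and kh: "(sin (k * h))\<^sup>2 = (sin (k * (a - b) / 2))\<^sup>2"
    using sin_abs[of "(a - b) / 2"] sin_abs[of "k * (a - b) / 2"] \<theta>
    by (simp_all add: h_def k_def abs_mult)
  show "cmod (rcis r a - rcis p b) = 2 * sqrt (r * p) * sqrt ((sinh l)\<^sup>2 + (sin h)\<^sup>2)"
    using r p by (simp add: norm_rcis_diff l_def h)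
  have "cnj (rcis p b) = rcis p (- b)" by (simp add: rcis_def cis_cnj)
  then show "cmod (rcis r a - cnj (rcis p b)) = 2 * sqrt (r * p) * sqrt ((sinh l)\<^sup>2 + (sin m)\<^sup>2)"
    using r p by (simp add: norm_rcis_diff l_def m_def)
  have "(cis \<theta>)\<^sup>2 * cnj (rcis p b) = rcis p (2 * \<theta> - b)"
    by (simp add: rcis_def cis_cnj power2_eq_square mult.left_commute cis_mult)
  moreover have "(a - (2 * \<theta> - b)) / 2 = - (\<theta> - m)" by (simp add: m_def field_simps)
  then have "(sin ((a - (2 * \<theta> - b)) / 2))\<^sup>2 = (sin (\<theta> - m))\<^sup>2" by (simp only: sin_minus) simp
  ultimately show "cmod (rcis r a - (cis \<theta>)\<^sup>2 * cnj (rcis p b))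
      = 2 * sqrt (r * p) * sqrt ((sinh l)\<^sup>2 + (sin (\<theta> - m))\<^sup>2)"
    using r p by (simp add: norm_rcis_diff l_def)
  show "tanh (rho_S \<theta> (rcis r a) (rcis p b) / 2)
      = sqrt ((sinh (k * l))\<^sup>2 + (sin (k * h))\<^sup>2) / sqrt ((sinh (k * l))\<^sup>2 + (sin (k * m))\<^sup>2)"
    using tanh_rho_S_polar[OF \<theta>(1) less_imp_le[OF \<theta>(2)] r p a b] kh
    by (simp add: k_def l_def m_def times_divide_eq_right)
qed

lemma sector_half_angles:
  fixes \<theta> a b k \<mu> :: real
  assumes a: "0 < a" "a < \<theta>" and b: "0 < b" "b < \<theta>" and k: "0 < k" "k * \<theta> = pi"
    and \<mu>: "\<mu> = (a + b) / 2 \<or> \<mu> = \<theta> - (a + b) / 2"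
  shows "0 < \<mu>" and "\<mu> < \<theta>" and "\<bar>a - b\<bar> / 2 \<le> \<mu>" and "k * (\<mu> + \<bar>a - b\<bar> / 2) < pi"
    and "(sin (k * \<mu>))\<^sup>2 = (sin (k * ((a + b) / 2)))\<^sup>2"
proof -
  show "0 < \<mu>" "\<mu> < \<theta>" "\<bar>a - b\<bar> / 2 \<le> \<mu>"
    using \<mu> a b by (auto simp: field_simps split: abs_split)
  have sum: "\<mu> + \<bar>a - b\<bar> / 2 < \<theta>" using \<mu> a b by (auto simp: field_simps split: abs_split)
  show "k * (\<mu> + \<bar>a - b\<bar> / 2) < pi" using mult_strict_left_mono[OF sum k(1)] k(2) by simp
  have "sin (k * (\<theta> - (a + b) / 2)) = sin (k * ((a + b) / 2))"
    using k(2) sin_pi_minus[of "k * ((a + b) / 2)"] by (simp add: right_diff_distrib)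
  with \<mu> show "(sin (k * \<mu>))\<^sup>2 = (sin (k * ((a + b) / 2)))\<^sup>2" by (elim disjE) (simp_all only:)
qed

text \<open>The alternative \<open>\<mu> = \<theta> - m\<close> is the angle \<open>m\<close> of the two points after the reflection
  \<open>z \<mapsto> cis \<theta> * cnj z\<close> of the sector onto itself, which swaps its boundary rays.\<close>
lemma sector_detour_polar_bounds:
  assumes \<theta>: "0 < \<theta>" "\<theta> < pi" and r: "0 < r" and p: "0 < p"
    and a: "0 < a" "a < \<theta>" and b: "0 < b" "b < \<theta>"
  defines "G \<equiv> 2 * sqrt (r * p)" and "l \<equiv> ln (r / p) / 2" and "m \<equiv> (a + b) / 2"
    and "D \<equiv> frontier_detour (sector \<theta>) (rcis r a) (rcis p b)"
  shows "\<exists>\<mu>. (\<mu> = m \<or> \<mu> = \<theta> - m) \<and> G * sqrt ((sinh l)\<^sup>2 + (sin \<mu>)\<^sup>2) \<le> D"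
    and "\<exists>\<mu>. (\<mu> = m \<or> \<mu> = \<theta> - m) \<and> \<mu> \<le> \<theta> / 2 \<and> D \<le> G * sqrt ((sinh l)\<^sup>2 + (sin \<mu>)\<^sup>2)"
    and "0 < D"
proof -
  note ids = sector_polar_identities[OF \<theta> r p a b, folded G_def l_def m_def]
  have "min (G * sqrt ((sinh l)\<^sup>2 + (sin m)\<^sup>2)) (G * sqrt ((sinh l)\<^sup>2 + (sin (\<theta> - m))\<^sup>2)) \<le> D"
    using sector_detour_ge[OF \<theta>, of "rcis r a" "rcis p b"] unfolding ids(2,3) D_def .
  then show lower: "\<exists>\<mu>. (\<mu> = m \<or> \<mu> = \<theta> - m) \<and> G * sqrt ((sinh l)\<^sup>2 + (sin \<mu>)\<^sup>2) \<le> D"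
    unfolding min_def by (cases "G * sqrt ((sinh l)\<^sup>2 + (sin m)\<^sup>2) \<le> G * sqrt ((sinh l)\<^sup>2 + (sin (\<theta> - m))\<^sup>2)")
      (simp_all only: if_True if_False, blast+)
  show "\<exists>\<mu>. (\<mu> = m \<or> \<mu> = \<theta> - m) \<and> \<mu> \<le> \<theta> / 2 \<and> D \<le> G * sqrt ((sinh l)\<^sup>2 + (sin \<mu>)\<^sup>2)"
  proof (cases "m \<le> \<theta> / 2")
    case True
    then have "a + b \<le> pi" using \<theta> by (simp add: m_def field_simps)
    from sector_detour_le_conj[OF \<theta> r p a(1) b(1) this]
    have "D \<le> G * sqrt ((sinh l)\<^sup>2 + (sin m)\<^sup>2)" unfolding D_def ids(2) .
    with True show ?thesis by blast
  next
    case False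
    then have "(\<theta> - a) + (\<theta> - b) \<le> pi" using \<theta> by (simp add: m_def field_simps)
    from sector_detour_le_reflection[OF \<theta> r p a(2) b(2) this]
    have "D \<le> G * sqrt ((sinh l)\<^sup>2 + (sin (\<theta> - m))\<^sup>2)" unfolding D_def ids(3) .
    with False show ?thesis by auto
  qed
  obtain \<mu> where \<mu>: "\<mu> = m \<or> \<mu> = \<theta> - m" and "G * sqrt ((sinh l)\<^sup>2 + (sin \<mu>)\<^sup>2) \<le> D"
    using lower by blast
  have "0 < \<mu>" "\<mu> < pi" using \<mu> \<theta> a b by (auto simp: m_def field_simps)
  then have "0 < sin \<mu>" by (rule sin_gt_zero)
  then have "0 < (sinh l)\<^sup>2 + (sin \<mu>)\<^sup>2" by (intro add_nonneg_pos) auto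
  then have "0 < G * sqrt ((sinh l)\<^sup>2 + (sin \<mu>)\<^sup>2)" using r p by (simp add: G_def)
  with \<open>G * sqrt ((sinh l)\<^sup>2 + (sin \<mu>)\<^sup>2) \<le> D\<close> show "0 < D" by linarith
qed

lemma s_metric_le_tanh_rho_S:
  assumes \<theta>: "0 < \<theta>" "\<theta> < pi" and x: "x \<in> sector \<theta>" and y: "y \<in> sector \<theta>"
  shows "s_metric (sector \<theta>) x y \<le> tanh (rho_S \<theta> x y / 2)"
proof -
  obtain r a where r: "0 < r" and a: "0 < a" "a < \<theta>" and xr: "x = rcis r a"
    using x by (rule sector_polarE)
  obtain p b where p: "0 < p" and b: "0 < b" "b < \<theta>" and yr: "y = rcis p b"
    using y by (rule sector_polarE)
  define k l h m where "k = pi / \<theta>" and "l = ln (r / p) / 2"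
    and "h = \<bar>a - b\<bar> / 2" and "m = (a + b) / 2"
  define G D where "G = 2 * sqrt (r * p)" and "D = frontier_detour (sector \<theta>) x y"
  note ids = sector_polar_identities[OF \<theta> r p a b, folded k_def l_def h_def m_def G_def xr yr]
  note bounds = sector_detour_polar_bounds[OF \<theta> r p a b, folded G_def l_def m_def xr yr, folded D_def]
  have k: "1 \<le> k" "0 < k" "k * \<theta> = pi" using \<theta> by (simp_all add: k_def field_simps)
  have G: "0 < G" using r p by (simp add: G_def)
  obtain \<mu> where \<mu>: "\<mu> = m \<or> \<mu> = \<theta> - m" and D: "G * sqrt ((sinh l)\<^sup>2 + (sin \<mu>)\<^sup>2) \<le> D"
    using bounds(1) by blast
  note half = sector_half_angles[OF a b k(2,3) \<mu>[unfolded m_def], folded h_def m_def]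
  have "0 < sin \<mu>" using half(1,2) \<theta> by (intro sin_gt_zero) auto
  then have Gpos: "0 < G * sqrt ((sinh l)\<^sup>2 + (sin \<mu>)\<^sup>2)" using G by (simp add: add_nonneg_pos)
  have "s_metric (sector \<theta>) x y = G * sqrt ((sinh l)\<^sup>2 + (sin h)\<^sup>2) / D"
    by (simp add: s_metric_eq_detour ids(1) D_def)
  also have "\<dots> \<le> G * sqrt ((sinh l)\<^sup>2 + (sin h)\<^sup>2) / (G * sqrt ((sinh l)\<^sup>2 + (sin \<mu>)\<^sup>2))"
    by (rule frac_le[OF _ order_refl Gpos D]) (use G in simp)
  also have "\<dots> = sqrt ((sinh l)\<^sup>2 + (sin h)\<^sup>2) / sqrt ((sinh l)\<^sup>2 + (sin \<mu>)\<^sup>2)"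
    using G by simp
  also have "\<dots> \<le> sqrt ((sinh (k * l))\<^sup>2 + (sin (k * h))\<^sup>2) / sqrt ((sinh (k * l))\<^sup>2 + (sin (k * \<mu>))\<^sup>2)"
    using half k by (intro sinh_sin_ratio_le) (auto simp: h_def)
  also have "\<dots> = tanh (rho_S \<theta> x y / 2)" using ids(4) half(5) by simp
  finally show ?thesis .
qed

lemma tanh_rho_S_le_s_metric:
  assumes \<theta>: "0 < \<theta>" "\<theta> < pi" and x: "x \<in> sector \<theta>" and y: "y \<in> sector \<theta>"
  shows "tanh (rho_S \<theta> x y / 2) \<le> (pi / \<theta>) * sin (\<theta> / 2) * s_metric (sector \<theta>) x y"
proof -
  obtain r a where r: "0 < r" and a: "0 < a" "a < \<theta>" and xr: "x = rcis r a"
    using x by (rule sector_polarE)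
  obtain p b where p: "0 < p" and b: "0 < b" "b < \<theta>" and yr: "y = rcis p b"
    using y by (rule sector_polarE)
  define k l h m where "k = pi / \<theta>" and "l = ln (r / p) / 2"
    and "h = \<bar>a - b\<bar> / 2" and "m = (a + b) / 2"
  define G D where "G = 2 * sqrt (r * p)" and "D = frontier_detour (sector \<theta>) x y"
  note ids = sector_polar_identities[OF \<theta> r p a b, folded k_def l_def h_def m_def G_def xr yr]
  note bounds = sector_detour_polar_bounds[OF \<theta> r p a b, folded G_def l_def m_def xr yr, folded D_def]
  have k: "1 \<le> k" "0 < k" "k * \<theta> = pi" using \<theta> by (simp_all add: k_def field_simps)
  have G: "0 < G" using r p by (simp add: G_def)
  obtain \<mu> where \<mu>: "\<mu> = m \<or> \<mu> = \<theta> - m" and "\<mu> \<le> \<theta> / 2"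
    and D: "D \<le> G * sqrt ((sinh l)\<^sup>2 + (sin \<mu>)\<^sup>2)"
    using bounds(2) by blast
  note half = sector_half_angles[OF a b k(2,3) \<mu>[unfolded m_def], folded h_def m_def]
  have "k * \<mu> \<le> pi / 2" using mult_left_mono[OF \<open>\<mu> \<le> \<theta> / 2\<close>, of k] k by simp
  have C: "k * sin (pi / (2 * k)) = (pi / \<theta>) * sin (\<theta> / 2)" using \<theta> by (simp add: k_def)
  have "0 \<le> k * sin (pi / (2 * k))" unfolding C using \<theta> by (simp add: sin_ge_zero)
  have "sqrt ((sinh l)\<^sup>2 + (sin h)\<^sup>2) / sqrt ((sinh l)\<^sup>2 + (sin \<mu>)\<^sup>2)
      = G * sqrt ((sinh l)\<^sup>2 + (sin h)\<^sup>2) / (G * sqrt ((sinh l)\<^sup>2 + (sin \<mu>)\<^sup>2))"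
    using G by simp
  also have "\<dots> \<le> G * sqrt ((sinh l)\<^sup>2 + (sin h)\<^sup>2) / D"
    by (rule frac_le[OF _ order_refl bounds(3) D]) (use G in simp)
  also have "\<dots> = s_metric (sector \<theta>) x y"
    by (simp add: s_metric_eq_detour ids(1) D_def)
  finally have ratio: "sqrt ((sinh l)\<^sup>2 + (sin h)\<^sup>2) / sqrt ((sinh l)\<^sup>2 + (sin \<mu>)\<^sup>2)
      \<le> s_metric (sector \<theta>) x y" .
  have "tanh (rho_S \<theta> x y / 2)
      = sqrt ((sinh (k * l))\<^sup>2 + (sin (k * h))\<^sup>2) / sqrt ((sinh (k * l))\<^sup>2 + (sin (k * \<mu>))\<^sup>2)"
    using ids(4) half(5) by simp
  also have "\<dots> \<le> k * sin (pi / (2 * k)) * (sqrt ((sinh l)\<^sup>2 + (sin h)\<^sup>2) / sqrt ((sinh l)\<^sup>2 + (sin \<mu>)\<^sup>2))"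
    using half k \<open>k * \<mu> \<le> pi / 2\<close> by (intro sinh_sin_ratio_le_const) (auto simp: h_def)
  also have "\<dots> \<le> k * sin (pi / (2 * k)) * s_metric (sector \<theta>) x y"
    using ratio \<open>0 \<le> k * sin (pi / (2 * k))\<close> by (rule mult_left_mono)
  finally show ?thesis unfolding C .
qed

lemma sector_bisector_points:
  assumes \<theta>: "0 < \<theta>" "\<theta> < pi" and l: "0 < l"
  defines "x \<equiv> rcis (exp l) (\<theta> / 2)" and "y \<equiv> rcis (exp (- l)) (\<theta> / 2)"
  shows "x \<in> sector \<theta>" and "y \<in> sector \<theta>"
    and "tanh l \<le> s_metric (sector \<theta>) x y"
    and "s_metric (sector \<theta>) x y \<le> sinh l / sqrt ((sinh l)\<^sup>2 + (sin (\<theta> / 2))\<^sup>2)"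
    and "tanh (rho_S \<theta> x y / 2) = sinh (pi / \<theta> * l) / sqrt ((sinh (pi / \<theta> * l))\<^sup>2 + 1)"
proof -
  have h: "0 < \<theta> / 2" "\<theta> / 2 < \<theta>" using \<theta> by auto
  show "x \<in> sector \<theta>" "y \<in> sector \<theta>" unfolding x_def y_def using h \<theta> by (auto intro: rcis_in_sector)
  have "ln (exp l / exp (- l)) / 2 = l" "\<theta> - \<theta> / 2 = \<theta> / 2" "(\<theta> / 2 + \<theta> / 2) / 2 = \<theta> / 2"
    "pi / \<theta> * (\<theta> / 2) = pi / 2" "exp l * exp (- l) = 1"
    using \<theta> by (simp_all add: ln_div exp_minus_inverse)
  note ids = sector_polar_identities[OF \<theta> exp_gt_zero exp_gt_zero h h, of l "- l",
      folded x_def y_def, simplified this]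
  define D where "D = frontier_detour (sector \<theta>) x y"
  have S: "0 < sinh l" and "0 < sin (\<theta> / 2)" using l \<theta> by (auto intro: sin_gt_zero)
  then have d: "0 < sqrt ((sinh l)\<^sup>2 + (sin (\<theta> / 2))\<^sup>2)" by (simp add: add_pos_pos)
  have s: "s_metric (sector \<theta>) x y = 2 * sinh l / D"
    using S by (simp add: s_metric_eq_detour ids D_def)
  have D_ge: "2 * sqrt ((sinh l)\<^sup>2 + (sin (\<theta> / 2))\<^sup>2) \<le> D"
    using sector_detour_ge[OF \<theta>, of x y] by (simp add: ids D_def)
  have D_pos: "0 < D" using D_ge d by linarith
  have "D \<le> cmod (x - 0) + cmod (0 - y)"
    using frontier_detour_le[OF rays_in_frontier_sector(1)[OF \<theta> order_refl]] by (simp add: D_def)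
  also have "\<dots> = 2 * cosh l" by (simp add: x_def y_def cosh_def)
  finally have "D \<le> 2 * cosh l" .
  moreover have S2: "0 \<le> 2 * sinh l" using S by simp
  ultimately have "2 * sinh l / (2 * cosh l) \<le> 2 * sinh l / D"
    using D_pos by (intro frac_le) auto
  then show "tanh l \<le> s_metric (sector \<theta>) x y" by (simp add: s tanh_def)
  have "2 * sinh l / D \<le> 2 * sinh l / (2 * sqrt ((sinh l)\<^sup>2 + (sin (\<theta> / 2))\<^sup>2))"
    using D_ge d S2 by (intro frac_le) auto
  then show "s_metric (sector \<theta>) x y \<le> sinh l / sqrt ((sinh l)\<^sup>2 + (sin (\<theta> / 2))\<^sup>2)"
    by (simp add: s)
  have "0 < sinh (pi / \<theta> * l)" using \<theta> l by simp
  then show "tanh (rho_S \<theta> x y / 2) = sinh (pi / \<theta> * l) / sqrt ((sinh (pi / \<theta> * l))\<^sup>2 + 1)"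
    by (simp add: ids)
qed

lemma exists_tanh_rho_S_less_mult_s_metric:
  assumes \<theta>: "0 < \<theta>" "\<theta> < pi" and c: "1 < c"
  shows "\<exists>x\<in>sector \<theta>. \<exists>y\<in>sector \<theta>. tanh (rho_S \<theta> x y / 2) < c * s_metric (sector \<theta>) x y"
proof -
  define l where "l = artanh (1 / c)"
  have "tanh l = 1 / c" using c by (simp add: l_def tanh_artanh_real)
  then have tl: "c * tanh l = 1" and "0 < tanh l" using c by auto
  then have l: "0 < l" by simp
  note P = sector_bisector_points[OF \<theta> l]
  have "tanh (rho_S \<theta> (rcis (exp l) (\<theta> / 2)) (rcis (exp (- l)) (\<theta> / 2)) / 2) < c * tanh l"
    using tl tanh_real_lt_1 by simp
  also have "\<dots> \<le> c * s_metric (sector \<theta>) (rcis (exp l) (\<theta> / 2)) (rcis (exp (- l)) (\<theta> / 2))"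
    using P(3) c by simp
  finally show ?thesis using P(1,2) by blast
qed

lemma exists_mult_s_metric_less_tanh_rho_S:
  assumes \<theta>: "0 < \<theta>" "\<theta> < pi" and c: "c < (pi / \<theta>) * sin (\<theta> / 2)"
  shows "\<exists>x\<in>sector \<theta>. \<exists>y\<in>sector \<theta>. c * s_metric (sector \<theta>) x y < tanh (rho_S \<theta> x y / 2)"
proof -
  define k \<sigma> c' where "k = pi / \<theta>" and "\<sigma> = sin (\<theta> / 2)" and "c' = max c 0"
  have k: "1 \<le> k" using \<theta> by (simp add: k_def field_simps)
  have \<sigma>: "0 < \<sigma>" using \<theta> by (simp add: \<sigma>_def sin_gt_zero)
  have "c < k * \<sigma>" using c by (simp add: k_def \<sigma>_def)
  moreover have "0 < k * \<sigma>" using k \<sigma> by simp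
  ultimately have c': "0 \<le> c'" "c \<le> c'" "c' < k * \<sigma>" by (auto simp: c'_def)
  define f where "f l = k * sqrt ((sinh l)\<^sup>2 + \<sigma>\<^sup>2) - c' * sqrt (k\<^sup>2 * (sinh l)\<^sup>2 + 1)" for l
  have lim0: "(f \<longlongrightarrow> k * sqrt ((sinh 0)\<^sup>2 + \<sigma>\<^sup>2) - c' * sqrt (k\<^sup>2 * (sinh 0)\<^sup>2 + 1)) (at_right 0)"
    unfolding f_def by (intro tendsto_intros)
  have "k * sqrt ((sinh 0)\<^sup>2 + \<sigma>\<^sup>2) - c' * sqrt (k\<^sup>2 * (sinh 0)\<^sup>2 + 1) = k * \<sigma> - c'"
    using \<sigma> by simp
  with lim0 have lim: "(f \<longlongrightarrow> k * \<sigma> - c') (at_right 0)" by (simp only:)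
  have "\<forall>\<^sub>F l in at_right 0. 0 < f l" using order_tendstoD(1)[OF lim, of 0] c' by simp
  then have "\<forall>\<^sub>F l in at_right 0. 0 < f l \<and> 0 < l" using eventually_at_right_less by (rule eventually_conj)
  from eventually_happens'[OF trivial_limit_at_right_real this]
  obtain l where fl: "0 < f l" and l: "0 < l" by blast
  define S T where "S = sinh l" and "T = sinh (k * l)"
  have S: "0 < S" using l by (simp add: S_def)
  define x y where "x = rcis (exp l) (\<theta> / 2)" and "y = rcis (exp (- l)) (\<theta> / 2)"
  note P = sector_bisector_points[OF \<theta> l, folded x_def y_def k_def \<sigma>_def S_def, folded T_def]
  have "0 \<le> s_metric (sector \<theta>) x y" using P(3) tanh_real_pos_iff[of l] l by linarith
  then have "c * s_metric (sector \<theta>) x y \<le> c' * s_metric (sector \<theta>) x y"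
    by (rule mult_right_mono[OF c'(2)])
  also have "\<dots> \<le> c' * (S / sqrt (S\<^sup>2 + \<sigma>\<^sup>2))"
    using P(4) c'(1) by (rule mult_left_mono)
  also have "\<dots> < k * S / sqrt ((k * S)\<^sup>2 + 1)"
  proof -
    define A B where "A = sqrt (S\<^sup>2 + \<sigma>\<^sup>2)" and "B = sqrt ((k * S)\<^sup>2 + 1)"
    have A: "0 < A" and B: "0 < B" using \<sigma> unfolding A_def B_def by (auto intro!: add_nonneg_pos)
    have "c' * B < k * A" using fl by (simp add: f_def A_def B_def S_def power_mult_distrib)
    then have "c' * S * B < k * S * A" using S by (simp add: mult.commute mult.left_commute)
    have "c' * (S / A) = c' * S * B / (A * B)" using B by simp
    also have "\<dots> < k * S * A / (A * B)"
      by (rule divide_strict_right_mono[OF \<open>c' * S * B < k * S * A\<close>]) (use A B in simp)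
    also have "\<dots> = k * S / B" using A by simp
    finally show ?thesis by (simp add: A_def B_def)
  qed
  also have "\<dots> \<le> T / sqrt (T\<^sup>2 + 1)"
  proof -
    have "(k * S)\<^sup>2 \<le> T\<^sup>2" using sinh_mult_sq_bounds(1)[OF k, of l] by (simp add: S_def T_def power_mult_distrib)
    then have "(k * S)\<^sup>2 * (T\<^sup>2 + 1) \<le> T\<^sup>2 * ((k * S)\<^sup>2 + 1)" by (simp add: algebra_simps)
    moreover have "0 < (k * S)\<^sup>2 + 1" "0 < T\<^sup>2 + 1" by (auto intro!: add_nonneg_pos)
    ultimately have "sqrt ((k * S)\<^sup>2) / sqrt ((k * S)\<^sup>2 + 1) \<le> sqrt (T\<^sup>2) / sqrt (T\<^sup>2 + 1)"
      using sqrt_div_sqrt_le by blast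
    moreover have "0 \<le> T" using k l by (simp add: T_def)
    ultimately show ?thesis using k S by simp
  qed
  finally have "c * s_metric (sector \<theta>) x y < tanh (rho_S \<theta> x y / 2)" unfolding P(5) .
  then show ?thesis using P(1,2) by blast
qed

theorem theorem4p5:
  fixes \<theta> :: real
  assumes "0 < \<theta>" "\<theta> < pi"
  shows "(\<forall>x\<in>sector \<theta>. \<forall>y\<in>sector \<theta>.
            s_metric (sector \<theta>) x y \<le> tanh (rho_S \<theta> x y / 2) \<and>
            tanh (rho_S \<theta> x y / 2) \<le> (pi / \<theta>) * sin (\<theta> / 2) * s_metric (sector \<theta>) x y)
      \<and> (\<forall>c>1. \<exists>x\<in>sector \<theta>. \<exists>y\<in>sector \<theta>.
            tanh (rho_S \<theta> x y / 2) < c * s_metric (sector \<theta>) x y)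
      \<and> (\<forall>c<(pi / \<theta>) * sin (\<theta> / 2). \<exists>x\<in>sector \<theta>. \<exists>y\<in>sector \<theta>.
            c * s_metric (sector \<theta>) x y < tanh (rho_S \<theta> x y / 2))"
  using s_metric_le_tanh_rho_S[OF assms] tanh_rho_S_le_s_metric[OF assms]
    exists_tanh_rho_S_less_mult_s_metric[OF assms] exists_mult_s_metric_less_tanh_rho_S[OF assms]
  by blast

end
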